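(* Let $X$ be a real Hilbert space, $I$ a finite index set, and $(T_i)_{i\in I}$ averaged nonexpansive, boundedly regular operators $X\to X$ with $Z_i=\operatorname{Fix}T_i$ and $Z=\bigcap_{i\in I}Z_i\neq\varnothing$. Suppose $(Z_i)_{i\in I}$ is innately boundedly regular. Let $x_0\in X$, let $r\colon\mathbb N\to I$ be a random map for $I$, and define $x_{n+1}=T_{r(n)}x_n$. Then $(x_n)_{n\in\mathbb N}$ converges strongly to some point $\bar z\in Z$. If moreover $Z$ is an affine subspace, then $\bar z=P_Zx_0$.
   Context: $T$ is averaged nonexpansive if $T=(1-\lambda)\mathrm{Id}+\lambda N$ with $\lambda\in[0,1[$ and $N$ nonexpansive. $T$ with $\operatorname{Fix}T\ne\varnothing$ is boundedly regular if every bounded sequence $(x_n)$ with $x_n-Tx_n\to0$ satisfies $d_{\operatorname{Fix}T}(x_n)\to0$. A finite family $(C_i)_{i\in I}$ of closed convex sets with $C=\bigcap_iC_i\ne\varnothing$ is boundedly regular if for every bounded sequence $(x_n)$, $\max_{i}d_{C_i}(x_n)\to0$ implies $d_C(x_n)\to0$; it is innately boundedly regular if $(C_j)_{j\in J}$ is boundedly regular for every nonempty $J\subseteq I$. A map $r\colon\mathbb N\to I$ is a random map for $I$ if $r^{-1}(i)$ is infinite for every $i\in I$. $P_Z$ is the metric projection onto $Z$. *)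

theory Defs
  imports "HOL-Analysis.Analysis"
begin

definition nonexpansive :: "('a::real_normed_vector \<Rightarrow> 'a) \<Rightarrow> bool" where
  "nonexpansive N \<longleftrightarrow> (\<forall>x y. norm (N x - N y) \<le> norm (x - y))"

definition averaged_nonexpansive :: "('a::real_normed_vector \<Rightarrow> 'a) \<Rightarrow> bool" where
  "averaged_nonexpansive T \<longleftrightarrow>
     (\<exists>lam N. 0 \<le> lam \<and> lam < 1 \<and> nonexpansive N \<and>
        T = (\<lambda>x. (1 - lam) *\<^sub>R x + lam *\<^sub>R N x))"

definition Fix :: "('a \<Rightarrow> 'a) \<Rightarrow> 'a set" where
  "Fix T = {x. T x = x}"

definition boundedly_regular_op :: "('a::real_normed_vector \<Rightarrow> 'a) \<Rightarrow> bool" where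
  "boundedly_regular_op T \<longleftrightarrow> Fix T \<noteq> {} \<and>
     (\<forall>x :: nat \<Rightarrow> 'a. bounded (range x) \<longrightarrow> ((\<lambda>n. x n - T (x n)) \<longlonglongrightarrow> 0)
        \<longrightarrow> ((\<lambda>n. infdist (x n) (Fix T)) \<longlonglongrightarrow> 0))"

definition boundedly_regular_family :: "'i set \<Rightarrow> ('i \<Rightarrow> 'a::real_normed_vector set) \<Rightarrow> bool" where
  "boundedly_regular_family I C \<longleftrightarrow>
     finite I \<and> I \<noteq> {} \<and> (\<forall>i\<in>I. closed (C i) \<and> convex (C i)) \<and> (\<Inter>i\<in>I. C i) \<noteq> {} \<and>
     (\<forall>x :: nat \<Rightarrow> 'a. bounded (range x) \<longrightarrow>
        ((\<lambda>n. Max ((\<lambda>i. infdist (x n) (C i)) ` I)) \<longlonglongrightarrow> 0)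
        \<longrightarrow> ((\<lambda>n. infdist (x n) (\<Inter>i\<in>I. C i)) \<longlonglongrightarrow> 0))"

definition innately_boundedly_regular :: "'i set \<Rightarrow> ('i \<Rightarrow> 'a::real_normed_vector set) \<Rightarrow> bool" where
  "innately_boundedly_regular I C \<longleftrightarrow>
     (\<forall>J. J \<subseteq> I \<and> J \<noteq> {} \<longrightarrow> boundedly_regular_family J C)"

definition random_map :: "'i set \<Rightarrow> (nat \<Rightarrow> 'i) \<Rightarrow> bool" where
  "random_map I r \<longleftrightarrow> (\<forall>n. r n \<in> I) \<and> (\<forall>i\<in>I. infinite (r -` {i}))"

text \<open>Metric projection onto Z (well-defined for nonempty closed convex Z in a Hilbert space).\<close>
definition metric_proj :: "'a::real_normed_vector set \<Rightarrow> 'a \<Rightarrow> 'a" where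
  "metric_proj Z x = (THE p. p \<in> Z \<and> (\<forall>w\<in>Z. dist x p \<le> dist x w))"

end

theory Submission
  imports Defs
begin

text \<open>
  Every \<open>T i\<close> is nonexpansive,
  so the iterates \<open>x n\<close> form a Fejer monotone sequence: each step does not increase the
  distance to any point of the active set \<open>Z (r n)\<close>, hence to any point of \<open>Z\<close>. Averagedness
  gives a strong Fejer inequality, which forces the step residuals to vanish, and bounded
  regularity of the single operators turns this into: \<open>infdist (x n) (Z (r n))\<close> tends to 0.
  The heart of the proof is an induction over the subsets \<open>J \<subseteq> I\<close>: late windows
  \<open>{n..<m}\<close> in which exactly the indices of \<open>J\<close> occur end near \<open>\<Inter>j\<in>J. Z j\<close>; the step
  splits the window at the last index that occurs for the first time and uses bounded
  regularity of the family \<open>(Z j)\<close>, \<open>j \<in> J\<close>. Since a random map produces such windows for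
  \<open>J = I\<close> arbitrarily late, \<open>infdist (x n) Z\<close> tends to 0, and a Fejer monotone sequence with
  this property converges to a point of the closed set \<open>Z\<close>. If \<open>Z\<close> is affine, every step
  is orthogonal to \<open>Z - Z\<close>, which identifies the limit as the projection of \<open>x 0\<close>.
\<close>

lemma infdist_le_infdist:
  assumes "\<And>a. a \<in> A \<Longrightarrow> dist y a \<le> dist x a"
  shows "infdist y A \<le> infdist x A"
proof (cases "A = {}")
  case True
  then show ?thesis by (simp add: infdist_def)
next
  case False
  show ?thesis
    unfolding infdist_notempty[OF False, of x]
    by (rule cINF_greatest[OF False]) (use infdist_le assms order_trans in blast)
qed

lemma infdist_lessE:
  assumes "A \<noteq> {}" "infdist x A < e"
  obtains a where "a \<in> A" "dist x a < e"
  using assms cINF_less_iff[of A "dist x" e] by (auto simp: infdist_notempty bdd_below_def intro: zero_le_dist)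

lemma nonexpansive_if_averaged:
  assumes "averaged_nonexpansive T"
  shows "nonexpansive T"
  unfolding nonexpansive_def
proof (intro allI)
  fix x y
  obtain lam N where lam: "0 \<le> lam" "lam < 1" and N: "nonexpansive N"
    and T: "T = (\<lambda>x. (1 - lam) *\<^sub>R x + lam *\<^sub>R N x)"
    using assms unfolding averaged_nonexpansive_def by blast
  have "norm (T x - T y) = norm ((1 - lam) *\<^sub>R (x - y) + lam *\<^sub>R (N x - N y))"
    by (simp add: T algebra_simps)
  also have "\<dots> \<le> (1 - lam) * norm (x - y) + lam * norm (N x - N y)"
    using norm_triangle_ineq[of "(1 - lam) *\<^sub>R (x - y)" "lam *\<^sub>R (N x - N y)"] lam by simp
  also have "\<dots> \<le> (1 - lam) * norm (x - y) + lam * norm (x - y)"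
    using N lam(1) unfolding nonexpansive_def by (simp add: mult_left_mono)
  finally show "norm (T x - T y) \<le> norm (x - y)" by (simp add: algebra_simps)
qed

lemma nonexpansive_fejer:
  assumes "nonexpansive T" "T w = w"
  shows "dist (T y) w \<le> dist y w"
  using assms unfolding nonexpansive_def dist_norm by metis

lemma closed_Fix:
  assumes "nonexpansive T"
  shows "closed (Fix T)"
proof -
  have "1-lipschitz_on UNIV T"
    using assms by (intro lipschitz_onI) (auto simp: nonexpansive_def dist_norm)
  then have "continuous_on UNIV T" by (rule lipschitz_on_continuous_on)
  then show ?thesis
    unfolding Fix_def by (intro closed_Collect_eq continuous_on_id)
qed

text \<open>Strong Fejer inequality: an averaged operator \<open>(1 - \<lambda>) Id + \<lambda> N\<close> brings every point closer
  to a fixed point by a fixed multiple of its squared residual (the constant \<open>1 - \<lambda>\<close> works).\<close>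
lemma averaged_strong_fejer:
  fixes T :: "'a::real_inner \<Rightarrow> 'a"
  assumes "averaged_nonexpansive T"
  shows "\<exists>c>0. \<forall>y w. T w = w \<longrightarrow> (dist (T y) w)\<^sup>2 + c * (dist y (T y))\<^sup>2 \<le> (dist y w)\<^sup>2"
proof -
  obtain lam N where lam: "0 \<le> lam" "lam < 1" and N: "nonexpansive N"
    and T: "T = (\<lambda>x. (1 - lam) *\<^sub>R x + lam *\<^sub>R N x)"
    using assms unfolding averaged_nonexpansive_def by blast
  have "(dist (T y) w)\<^sup>2 + (1 - lam) * (dist y (T y))\<^sup>2 \<le> (dist y w)\<^sup>2" if "T w = w" for y w
  proof -
    define a where "a = y - w"
    define b where "b = N y - w"
    have "lam *\<^sub>R (N w - w) = 0" using \<open>T w = w\<close> by (simp add: T algebra_simps)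
    then have "N w = w \<or> lam = 0" by auto
    then have bb: "lam * (b \<bullet> b) \<le> lam * (a \<bullet> a)"
      using N lam(1) unfolding nonexpansive_def a_def b_def
      by (metis mult_left_mono mult_zero_left norm_ge_zero power2_norm_eq_inner power_mono)
    have "T y - w = (1 - lam) *\<^sub>R a + lam *\<^sub>R b" "y - T y = lam *\<^sub>R (a - b)"
      by (simp_all add: T a_def b_def algebra_simps)
    then have sq: "(dist (T y) w)\<^sup>2 = ((1 - lam) *\<^sub>R a + lam *\<^sub>R b) \<bullet> ((1 - lam) *\<^sub>R a + lam *\<^sub>R b)"
      "(dist y (T y))\<^sup>2 = (lam *\<^sub>R (a - b)) \<bullet> (lam *\<^sub>R (a - b))"
      by (simp_all only: dist_norm power2_norm_eq_inner)
    have "(dist (T y) w)\<^sup>2 + (1 - lam) * (dist y (T y))\<^sup>2 + lam * (1 - lam)\<^sup>2 * ((a - b) \<bullet> (a - b))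
        = (1 - lam) * (a \<bullet> a) + lam * (b \<bullet> b)"
      unfolding sq by (simp add: inner_commute algebra_simps power2_eq_square)
    moreover have "0 \<le> lam * (1 - lam)\<^sup>2 * ((a - b) \<bullet> (a - b))" using lam by simp
    moreover have "(dist y w)\<^sup>2 = a \<bullet> a" by (simp add: a_def dist_norm power2_norm_eq_inner)
    ultimately show ?thesis using bb by (simp add: algebra_simps)
  qed
  then show ?thesis using lam(2) by (intro exI[of _ "1 - lam"]) auto
qed

lemma fejer_decseq:
  assumes "\<And>n. dist (x (Suc n)) w \<le> dist (x n) w"
  shows "decseq (\<lambda>n. dist (x n) w)"
  using assms by (simp add: decseq_Suc_iff)

lemma fejer_bounded:
  assumes "\<And>n. dist (x (Suc n)) p \<le> dist (x n) p"
  shows "bounded (range x)"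
proof (rule bounded_subset[OF bounded_cball])
  show "range x \<subseteq> cball p (dist (x 0) p)"
    using decseqD[OF fejer_decseq[of x, OF assms], of 0] by (auto simp: dist_commute)
qed

lemma fejer_gap_tendsto_zero:
  assumes "\<And>n. dist (x (Suc n)) p \<le> dist (x n) p"
  shows "(\<lambda>n. (dist (x n) p)\<^sup>2 - (dist (x (Suc n)) p)\<^sup>2) \<longlonglongrightarrow> 0"
proof -
  obtain L where "(\<lambda>n. dist (x n) p) \<longlonglongrightarrow> L"
    using decseq_convergent[OF fejer_decseq[of x, OF assms]] zero_le_dist by blast
  then have "(\<lambda>n. (dist (x n) p)\<^sup>2 - (dist (x (Suc n)) p)\<^sup>2) \<longlonglongrightarrow> L\<^sup>2 - L\<^sup>2"
    by (intro tendsto_intros LIMSEQ_Suc)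
  then show ?thesis by simp
qed

lemma fejer_convergent:
  fixes x :: "nat \<Rightarrow> 'a::complete_space"
  assumes Z: "closed Z" "Z \<noteq> {}"
    and fejer: "\<And>n w. w \<in> Z \<Longrightarrow> dist (x (Suc n)) w \<le> dist (x n) w"
    and approach: "(\<lambda>n. infdist (x n) Z) \<longlonglongrightarrow> 0"
  shows "\<exists>z\<in>Z. x \<longlonglongrightarrow> z"
proof -
  have "Cauchy x"
  proof (rule metric_CauchyI)
    fix e :: real assume "e > 0"
    then obtain M where "infdist (x M) Z < e / 2"
      using order_tendstoD(2)[OF approach, of "e / 2"] by (auto simp: eventually_sequentially)
    then obtain w where w: "w \<in> Z" "dist (x M) w < e / 2"
      using infdist_lessE[OF Z(2)] by blast
    have "dist (x m) (x n) < e" if "M \<le> m" "M \<le> n" for m n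
    proof -
      have "dist (x m) w \<le> dist (x M) w" "dist (x n) w \<le> dist (x M) w"
        using decseqD[OF fejer_decseq[of x, OF fejer[OF w(1)]]] that by auto
      then show ?thesis using w(2) dist_triangle2[of "x m" "x n" w] by linarith
    qed
    then show "\<exists>M. \<forall>m\<ge>M. \<forall>n\<ge>M. dist (x m) (x n) < e" by blast
  qed
  then obtain z where z: "x \<longlonglongrightarrow> z"
    unfolding Cauchy_convergent_iff convergent_def by blast
  have "infdist z Z = 0"
    using LIMSEQ_unique[OF tendsto_infdist[OF z] approach] .
  then show ?thesis using z in_closed_iff_infdist_zero[OF Z] by blast
qed

text \<open>Off these steps the sequence is replaced by the fixed point, so bounded regularity of \<open>T\<close> applies.\<close>
lemma averaged_regular_along_steps:
  fixes T :: "'a::real_inner \<Rightarrow> 'a"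
  assumes avg: "averaged_nonexpansive T" and reg: "boundedly_regular_op T"
    and p: "T p = p" and bdd: "bounded (range x)"
    and step: "\<And>n. P n \<Longrightarrow> x (Suc n) = T (x n)"
    and gap: "(\<lambda>n. (dist (x n) p)\<^sup>2 - (dist (x (Suc n)) p)\<^sup>2) \<longlonglongrightarrow> 0"
    and "e > 0"
  shows "\<forall>\<^sub>F n in sequentially. P n \<longrightarrow> infdist (x n) (Fix T) < e"
proof -
  obtain c where c: "c > 0"
    "\<And>y. (dist (T y) p)\<^sup>2 + c * (dist y (T y))\<^sup>2 \<le> (dist y p)\<^sup>2"
    using averaged_strong_fejer[OF avg] p by blast
  define y where "y n = (if P n then x n else p)" for n
  have residual: "dist (y n) (T (y n)) \<le> sqrt (\<bar>(dist (x n) p)\<^sup>2 - (dist (x (Suc n)) p)\<^sup>2\<bar> / c)" for n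
  proof (cases "P n")
    case True
    have "c * (dist (x n) (T (x n)))\<^sup>2 \<le> (dist (x n) p)\<^sup>2 - (dist (x (Suc n)) p)\<^sup>2"
      using c(2)[of "x n"] step[OF True] by simp
    then have "(dist (x n) (T (x n)))\<^sup>2 \<le> \<bar>(dist (x n) p)\<^sup>2 - (dist (x (Suc n)) p)\<^sup>2\<bar> / c"
      using c(1) by (simp add: field_simps)
    then show ?thesis using True by (simp add: y_def real_le_rsqrt)
  qed (use c(1) in \<open>simp add: y_def p\<close>)
  have lim: "(\<lambda>n. sqrt (\<bar>(dist (x n) p)\<^sup>2 - (dist (x (Suc n)) p)\<^sup>2\<bar> / c)) \<longlonglongrightarrow> 0"
    using tendsto_real_sqrt[OF tendsto_divide_zero[OF tendsto_rabs_zero[OF gap], of c]] by simp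
  have "(\<lambda>n. y n - T (y n)) \<longlonglongrightarrow> 0"
    by (rule Lim_null_comparison[OF always_eventually lim]) (use residual in \<open>simp add: dist_norm\<close>)
  moreover have "bounded (range y)"
    by (rule bounded_subset[of "insert p (range x)"]) (use bdd in \<open>auto simp: y_def\<close>)
  ultimately have "(\<lambda>n. infdist (y n) (Fix T)) \<longlonglongrightarrow> 0"
    using reg unfolding boundedly_regular_op_def by blast
  then have "\<forall>\<^sub>F n in sequentially. infdist (y n) (Fix T) < e"
    using \<open>e > 0\<close> by (rule order_tendstoD(2))
  then show ?thesis by (rule eventually_mono) (auto simp: y_def)
qed

lemma iteration_approaches_active_fixed_sets:
  fixes T :: "'i \<Rightarrow> 'a::real_inner \<Rightarrow> 'a"
  assumes I: "finite I" and avg: "\<And>i. i \<in> I \<Longrightarrow> averaged_nonexpansive (T i)"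
    and reg: "\<And>i. i \<in> I \<Longrightarrow> boundedly_regular_op (T i)"
    and rI: "\<And>n. r n \<in> I" and x: "\<And>n. x (Suc n) = T (r n) (x n)"
    and p: "\<And>i. i \<in> I \<Longrightarrow> T i p = p"
  shows "(\<lambda>n. infdist (x n) (Fix (T (r n)))) \<longlonglongrightarrow> 0"
proof (rule order_tendstoI)
  have fejer: "dist (x (Suc n)) p \<le> dist (x n) p" for n
    using nonexpansive_fejer[OF nonexpansive_if_averaged[OF avg[OF rI]] p[OF rI]] x by simp
  fix e :: real assume "e > 0"
  have "\<forall>i\<in>I. \<forall>\<^sub>F n in sequentially. r n = i \<longrightarrow> infdist (x n) (Fix (T i)) < e"
  proof
    fix i assume "i \<in> I"
    show "\<forall>\<^sub>F n in sequentially. r n = i \<longrightarrow> infdist (x n) (Fix (T i)) < e"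
      by (rule averaged_regular_along_steps[OF avg reg p fejer_bounded[of x, OF fejer] _
          fejer_gap_tendsto_zero[of x, OF fejer] \<open>e > 0\<close>]) (use \<open>i \<in> I\<close> x in auto)
  qed
  then have "\<forall>\<^sub>F n in sequentially. \<forall>i\<in>I. r n = i \<longrightarrow> infdist (x n) (Fix (T i)) < e"
    by (rule eventually_ball_finite[OF I])
  then show "\<forall>\<^sub>F n in sequentially. infdist (x n) (Fix (T (r n))) < e"
    by (rule eventually_mono) (use rI in blast)
qed (intro always_eventually allI, meson infdist_nonneg less_le_trans)

lemma window_last_new_index:
  fixes r :: "nat \<Rightarrow> 'i"
  assumes "r ` {n..<m} = J" "J \<noteq> {}"
  shows "\<exists>q. n \<le> q \<and> q < m \<and> r ` {n..<q} = J - {r q}"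
  using assms
proof (induction m)
  case 0
  then show ?case by simp
next
  case (Suc m)
  show ?case
  proof (cases "r ` {n..<m} = J")
    case True
    then show ?thesis using Suc.IH Suc.prems(2) less_SucI by blast
  next
    case False
    have "n \<le> m" using Suc.prems by (cases "n \<le> m") auto
    then have "J = insert (r m) (r ` {n..<m})"
      using Suc.prems(1) atLeastLessThanSuc by auto
    moreover have "r m \<notin> r ` {n..<m}" using False calculation by (metis insert_absorb)
    ultimately have "r ` {n..<m} = J - {r m}" by simp
    then show ?thesis using \<open>n \<le> m\<close> by blast
  qed
qed

lemma infdist_window_mono:
  assumes fejer: "\<And>t w. w \<in> Z (r t) \<Longrightarrow> dist (x (Suc t)) w \<le> dist (x t) w"
    and "n \<le> m" "r ` {n..<m} \<subseteq> J"
  shows "infdist (x m) (\<Inter>j\<in>J. Z j) \<le> infdist (x n) (\<Inter>j\<in>J. Z j)"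
  using assms(2,3)
proof (induction m rule: dec_induct)
  case base
  then show ?case by simp
next
  case (step m)
  have "infdist (x (Suc m)) (\<Inter>j\<in>J. Z j) \<le> infdist (x m) (\<Inter>j\<in>J. Z j)"
  proof (rule infdist_le_infdist)
    fix w assume "w \<in> (\<Inter>j\<in>J. Z j)"
    moreover have "r m \<in> J" using step.hyps step.prems by auto
    ultimately show "dist (x (Suc m)) w \<le> dist (x m) w" by (intro fejer) blast
  qed
  with step show ?case by force
qed

lemma random_map_window:
  assumes "random_map I r" "finite I"
  shows "\<exists>m. r ` {N..<m} = I"
proof -
  have "\<forall>i\<in>I. \<exists>t\<ge>N. r t = i"
    using assms(1) unfolding random_map_def infinite_nat_iff_unbounded_le by blast
  then obtain t where t: "\<And>i. i \<in> I \<Longrightarrow> N \<le> t i \<and> r (t i) = i" by metis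
  define m where "m = Suc (Max (insert N (t ` I)))"
  have "t i \<in> {N..<m}" if "i \<in> I" for i
    using t[OF that] that assms(2) by (simp add: m_def le_imp_less_Suc)
  then have "I \<subseteq> r ` {N..<m}" using t by (metis image_eqI subsetI)
  moreover have "r ` {N..<m} \<subseteq> I" using assms(1) by (auto simp: random_map_def)
  ultimately show ?thesis by blast
qed

lemma boundedly_regular_family_eps_delta:
  assumes reg: "boundedly_regular_family J C" and B: "bounded B" and "e > 0"
  obtains d where "d > 0"
    "\<And>y. y \<in> B \<Longrightarrow> (\<forall>j\<in>J. infdist y (C j) < d) \<Longrightarrow> infdist y (\<Inter>j\<in>J. C j) < e"
proof -
  have "\<exists>d>0. \<forall>y\<in>B. (\<forall>j\<in>J. infdist y (C j) < d) \<longrightarrow> infdist y (\<Inter>j\<in>J. C j) < e"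
  proof (rule ccontr)
    assume "\<not> ?thesis"
    then have "\<forall>d>0. \<exists>y\<in>B. (\<forall>j\<in>J. infdist y (C j) < d) \<and> e \<le> infdist y (\<Inter>j\<in>J. C j)"
      by (meson not_le)
    then have "\<forall>k::nat. \<exists>y\<in>B. (\<forall>j\<in>J. infdist y (C j) < inverse (Suc k)) \<and> e \<le> infdist y (\<Inter>j\<in>J. C j)"
      by simp
    then obtain y where y: "\<And>k. y k \<in> B" "\<And>k j. j \<in> J \<Longrightarrow> infdist (y k) (C j) < inverse (Suc k)"
      "\<And>k. e \<le> infdist (y k) (\<Inter>j\<in>J. C j)"
      by metis
    have J: "finite J" "J \<noteq> {}" using reg unfolding boundedly_regular_family_def by auto
    have "(\<lambda>k. Max ((\<lambda>j. infdist (y k) (C j)) ` J)) \<longlonglongrightarrow> 0"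
    proof (rule Lim_null_comparison[OF always_eventually LIMSEQ_inverse_real_of_nat], intro allI)
      fix k
      obtain j where "j \<in> J" using J by blast
      then have "0 \<le> Max ((\<lambda>j. infdist (y k) (C j)) ` J)"
        using J Max_ge[of "(\<lambda>j. infdist (y k) (C j)) ` J"] infdist_nonneg order_trans by blast
      moreover have "Max ((\<lambda>j. infdist (y k) (C j)) ` J) \<le> inverse (Suc k)"
        using J y(2)[of _ k] by (simp add: less_imp_le)
      ultimately show "norm (Max ((\<lambda>j. infdist (y k) (C j)) ` J)) \<le> inverse (Suc k)" by simp
    qed
    moreover have "bounded (range y)" using y(1) B by (meson bounded_subset image_subset_iff)
    ultimately have "(\<lambda>k. infdist (y k) (\<Inter>j\<in>J. C j)) \<longlonglongrightarrow> 0"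
      using reg unfolding boundedly_regular_family_def by blast
    then have "\<forall>\<^sub>F k in sequentially. infdist (y k) (\<Inter>j\<in>J. C j) < e"
      using \<open>e > 0\<close> by (rule order_tendstoD(2))
    then obtain k where "infdist (y k) (\<Inter>j\<in>J. C j) < e"
      by (auto simp: eventually_sequentially)
    then show False using y(3)[of k] by linarith
  qed
  then show ?thesis using that by blast
qed

lemma regular_window_step:
  fixes x :: "nat \<Rightarrow> 'a::real_normed_vector" and r :: "nat \<Rightarrow> 'i" and Z :: "'i \<Rightarrow> 'a set"
  assumes fejer: "\<And>t w. w \<in> Z (r t) \<Longrightarrow> dist (x (Suc t)) w \<le> dist (x t) w"
    and window: "r ` {n..<m} = J" and "J \<noteq> {}" and nonempty: "(\<Inter>j\<in>J. Z j) \<noteq> {}"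
    and reg: "\<And>y. y \<in> range x \<Longrightarrow> (\<forall>j\<in>J. infdist y (Z j) < d) \<Longrightarrow> infdist y (\<Inter>j\<in>J. Z j) < e"
    and active: "\<And>q. n \<le> q \<Longrightarrow> infdist (x q) (Z (r q)) < d"
    and smaller: "\<And>J' q. J' \<subset> J \<Longrightarrow> J' \<noteq> {} \<Longrightarrow> r ` {n..<q} = J' \<Longrightarrow>
        infdist (x q) (\<Inter>j\<in>J'. Z j) < d"
  shows "infdist (x m) (\<Inter>j\<in>J. Z j) < e"
proof -
  obtain q where q: "n \<le> q" "q < m" "r ` {n..<q} = J - {r q}"
    using window_last_new_index[OF window \<open>J \<noteq> {}\<close>] by blast
  have "r q \<in> J" using window q(1,2) by auto
  have "infdist (x q) (Z j) < d" if "j \<in> J" for j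
  proof (cases "j = r q")
    case True
    then show ?thesis using active q(1) by blast
  next
    case False
    then have j: "j \<in> J - {r q}" using that by blast
    have "infdist (x q) (Z j) \<le> infdist (x q) (\<Inter>k\<in>J - {r q}. Z k)"
      by (rule infdist_mono) (use j nonempty in blast)+
    also have "\<dots> < d" using smaller[OF _ _ q(3)] \<open>r q \<in> J\<close> j by blast
    finally show ?thesis .
  qed
  then have "infdist (x q) (\<Inter>j\<in>J. Z j) < e" using reg by blast
  moreover have "infdist (x m) (\<Inter>j\<in>J. Z j) \<le> infdist (x q) (\<Inter>j\<in>J. Z j)"
    using infdist_window_mono[of Z r x, OF fejer, of q m J] q(1,2) window by force
  ultimately show ?thesis by linarith
qed

lemma regular_windows:
  fixes x :: "nat \<Rightarrow> 'a::real_normed_vector" and r :: "nat \<Rightarrow> 'i" and Z :: "'i \<Rightarrow> 'a set"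
  assumes reg: "innately_boundedly_regular I Z" and bdd: "bounded (range x)"
    and fejer: "\<And>t w. w \<in> Z (r t) \<Longrightarrow> dist (x (Suc t)) w \<le> dist (x t) w"
    and steps: "(\<lambda>n. infdist (x n) (Z (r n))) \<longlonglongrightarrow> 0"
    and J: "J \<subseteq> I" "J \<noteq> {}" and "e > 0"
  shows "\<forall>\<^sub>F n in sequentially. \<forall>m. r ` {n..<m} = J \<longrightarrow> infdist (x m) (\<Inter>j\<in>J. Z j) < e"
proof -
  have family: "boundedly_regular_family J' Z" if "J' \<subseteq> I" "J' \<noteq> {}" for J'
    using reg that unfolding innately_boundedly_regular_def by blast
  have "finite J" using family[OF J] unfolding boundedly_regular_family_def by blast
  then show ?thesis using J \<open>e > 0\<close>
  proof (induction J arbitrary: e rule: finite_psubset_induct)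
    case (psubset J)
    obtain d where d: "d > 0"
      "\<And>y. y \<in> range x \<Longrightarrow> (\<forall>j\<in>J. infdist y (Z j) < d) \<Longrightarrow> infdist y (\<Inter>j\<in>J. Z j) < e"
      using boundedly_regular_family_eps_delta[OF family[OF psubset.prems(1,2)] bdd psubset.prems(3)]
      by blast
    have nonempty: "(\<Inter>j\<in>J. Z j) \<noteq> {}"
      using family[OF psubset.prems(1,2)] unfolding boundedly_regular_family_def by blast
    let ?S = "{J'. J' \<subset> J \<and> J' \<noteq> {}}"
    have "\<forall>\<^sub>F n in sequentially. \<forall>J'\<in>?S. \<forall>q. r ` {n..<q} = J' \<longrightarrow> infdist (x q) (\<Inter>j\<in>J'. Z j) < d"
    proof (rule eventually_ball_finite)
      show "finite ?S" by (rule finite_subset[of _ "Pow J"]) (use psubset.hyps in auto)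
      show "\<forall>J'\<in>?S. \<forall>\<^sub>F n in sequentially. \<forall>q. r ` {n..<q} = J' \<longrightarrow> infdist (x q) (\<Inter>j\<in>J'. Z j) < d"
        using psubset.IH psubset.prems(1) d(1) by auto
    qed
    moreover have "\<forall>\<^sub>F n in sequentially. \<forall>q\<ge>n. infdist (x q) (Z (r q)) < d"
      using order_tendstoD(2)[OF steps d(1)] by (simp add: eventually_all_ge_at_top)
    ultimately show ?case
    proof eventually_elim
      case (elim n)
      show ?case
      proof (intro allI impI)
        fix m assume window: "r ` {n..<m} = J"
        show "infdist (x m) (\<Inter>j\<in>J. Z j) < e"
          by (rule regular_window_step[where x=x and r=r and Z=Z, OF fejer window psubset.prems(2)
                nonempty d(2)]) (use elim in auto)
      qed
    qed
  qed
qed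

lemma random_iteration_approaches_intersection:
  fixes x :: "nat \<Rightarrow> 'a::real_normed_vector" and r :: "nat \<Rightarrow> 'i" and Z :: "'i \<Rightarrow> 'a set"
  assumes reg: "innately_boundedly_regular I Z" and rm: "random_map I r"
    and bdd: "bounded (range x)"
    and fejer: "\<And>t w. w \<in> Z (r t) \<Longrightarrow> dist (x (Suc t)) w \<le> dist (x t) w"
    and steps: "(\<lambda>n. infdist (x n) (Z (r n))) \<longlonglongrightarrow> 0"
  shows "(\<lambda>n. infdist (x n) (\<Inter>i\<in>I. Z i)) \<longlonglongrightarrow> 0"
proof (rule order_tendstoI)
  fix e :: real assume "e > 0"
  have I: "I \<noteq> {}" using rm unfolding random_map_def by blast
  then have "finite I"
    using reg unfolding innately_boundedly_regular_def boundedly_regular_family_def by blast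
  obtain N where N: "\<forall>n\<ge>N. \<forall>m. r ` {n..<m} = I \<longrightarrow> infdist (x m) (\<Inter>i\<in>I. Z i) < e"
    using regular_windows[OF reg bdd fejer steps order_refl I \<open>e > 0\<close>]
    by (auto simp: eventually_sequentially)
  obtain m where "r ` {N..<m} = I" using random_map_window[OF rm \<open>finite I\<close>] by blast
  then have "infdist (x m) (\<Inter>i\<in>I. Z i) < e" using N by blast
  moreover have "infdist (x k) (\<Inter>i\<in>I. Z i) \<le> infdist (x m) (\<Inter>i\<in>I. Z i)" if "m \<le> k" for k
    using infdist_window_mono[of Z r x, OF fejer that] rm by (auto simp: random_map_def)
  ultimately show "\<forall>\<^sub>F n in sequentially. infdist (x n) (\<Inter>i\<in>I. Z i) < e"
    unfolding eventually_sequentially by (meson le_less_trans)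
qed (intro always_eventually allI, meson infdist_nonneg less_le_trans)

text \<open>A step that brings a point no farther from any point of an affine set is orthogonal to its
  direction space: otherwise moving along a line in the set would contradict the Fejer property.\<close>
lemma affine_fejer_orthogonal:
  fixes x y :: "'a::real_inner"
  assumes Z: "affine Z" and a: "a \<in> Z" and b: "b \<in> Z"
    and fejer: "\<And>w. w \<in> Z \<Longrightarrow> dist y w \<le> dist x w"
  shows "(y - x) \<bullet> (a - b) = 0"
proof (rule ccontr)
  define d where "d = a - b"
  define u where "u = x - b"
  define v where "v = y - b"
  define k where "k = (u - v) \<bullet> d"
  define C where "C = u \<bullet> u - v \<bullet> v"
  assume "(y - x) \<bullet> (a - b) \<noteq> 0"
  then have "k \<noteq> 0" by (simp add: k_def u_def v_def d_def inner_diff_left)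
  have line: "2 * t * k \<le> C" for t
  proof -
    have "t *\<^sub>R a + (1 - t) *\<^sub>R b \<in> Z" using Z a b unfolding affine_def by auto
    then have "dist y (t *\<^sub>R a + (1 - t) *\<^sub>R b) \<le> dist x (t *\<^sub>R a + (1 - t) *\<^sub>R b)" by (rule fejer)
    moreover have "y - (t *\<^sub>R a + (1 - t) *\<^sub>R b) = v - t *\<^sub>R d"
      "x - (t *\<^sub>R a + (1 - t) *\<^sub>R b) = u - t *\<^sub>R d"
      by (simp_all add: v_def u_def d_def algebra_simps)
    ultimately have "norm (v - t *\<^sub>R d) ^ 2 \<le> norm (u - t *\<^sub>R d) ^ 2"
      by (simp add: dist_norm power_mono)
    then have "(v - t *\<^sub>R d) \<bullet> (v - t *\<^sub>R d) \<le> (u - t *\<^sub>R d) \<bullet> (u - t *\<^sub>R d)"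
      by (simp add: power2_norm_eq_inner)
    then show ?thesis
      by (simp add: k_def C_def inner_commute algebra_simps)
  qed
  have "2 * ((\<bar>C\<bar> + 1) / (2 * k)) * k = \<bar>C\<bar> + 1" using \<open>k \<noteq> 0\<close> by (simp add: field_simps)
  then show False using line[of "(\<bar>C\<bar> + 1) / (2 * k)"] by linarith
qed

text \<open>Characterization of the metric projection: \<open>z \<in> Z\<close> with \<open>x - z\<close> orthogonal to \<open>Z - Z\<close>
  is the (unique) nearest point of \<open>Z\<close> to \<open>x\<close>, by Pythagoras.\<close>
lemma metric_proj_eqI:
  fixes x z :: "'a::real_inner"
  assumes z: "z \<in> Z" and orth: "\<And>a b. a \<in> Z \<Longrightarrow> b \<in> Z \<Longrightarrow> (x - z) \<bullet> (a - b) = 0"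
  shows "metric_proj Z x = z"
proof -
  have pythagoras: "(dist x w)\<^sup>2 = (dist x z)\<^sup>2 + (dist z w)\<^sup>2" if "w \<in> Z" for w
  proof -
    have "(dist x w)\<^sup>2 = ((x - z) + (z - w)) \<bullet> ((x - z) + (z - w))"
      by (simp add: dist_norm power2_norm_eq_inner)
    also have "\<dots> = (x - z) \<bullet> (x - z) + (z - w) \<bullet> (z - w) + 2 * ((x - z) \<bullet> (z - w))"
      by (simp only: inner_add_left inner_add_right) (simp add: inner_commute)
    finally show ?thesis using orth[OF z that] by (simp add: dist_norm power2_norm_eq_inner)
  qed
  show ?thesis unfolding metric_proj_def
  proof (rule the_equality)
    show "z \<in> Z \<and> (\<forall>w\<in>Z. dist x z \<le> dist x w)"
    proof (intro conjI ballI z)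
      fix w assume "w \<in> Z"
      then have "(dist x z)\<^sup>2 \<le> (dist x w)\<^sup>2" using pythagoras by simp
      then show "dist x z \<le> dist x w" by (rule power2_le_imp_le) simp
    qed
  next
    fix p assume p: "p \<in> Z \<and> (\<forall>w\<in>Z. dist x p \<le> dist x w)"
    then have "dist x p \<le> dist x z" using z by blast
    then have "(dist x p)\<^sup>2 \<le> (dist x z)\<^sup>2" by (rule power_mono) simp
    then have "(dist z p)\<^sup>2 \<le> 0" using pythagoras[of p] p by linarith
    then show "p = z" by simp
  qed
qed

text \<open>The limit in an affine set of a Fejer monotone sequence is the projection of its starting point,
  because every step, hence \<open>x n - x 0\<close> and its limit, is orthogonal to \<open>Z - Z\<close>.\<close>
lemma fejer_limit_metric_proj:
  fixes x :: "nat \<Rightarrow> 'a::real_inner"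
  assumes Z: "affine Z" and fejer: "\<And>n w. w \<in> Z \<Longrightarrow> dist (x (Suc n)) w \<le> dist (x n) w"
    and z: "z \<in> Z" "x \<longlonglongrightarrow> z"
  shows "z = metric_proj Z (x 0)"
proof (rule metric_proj_eqI[OF z(1), symmetric])
  fix a b assume "a \<in> Z" "b \<in> Z"
  have "(x n - x 0) \<bullet> (a - b) = 0" for n
  proof (induction n)
    case (Suc n)
    have "(x (Suc n) - x n) \<bullet> (a - b) = 0"
      using affine_fejer_orthogonal[OF Z \<open>a \<in> Z\<close> \<open>b \<in> Z\<close> fejer] .
    then show ?case using Suc.IH by (simp add: inner_diff_left)
  qed simp
  moreover have "(\<lambda>n. (x n - x 0) \<bullet> (a - b)) \<longlonglongrightarrow> (z - x 0) \<bullet> (a - b)"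
    by (intro tendsto_intros z(2))
  ultimately have "(z - x 0) \<bullet> (a - b) = 0" by (simp add: LIMSEQ_const_iff)
  then show "(x 0 - z) \<bullet> (a - b) = 0" by (simp add: inner_diff_left)
qed

theorem theorem7p2:
  fixes T :: "'i \<Rightarrow> 'a::{real_inner, complete_space} \<Rightarrow> 'a"
    and I :: "'i set" and r :: "nat \<Rightarrow> 'i" and x0 :: 'a
  assumes "finite I"
    and "\<And>i. i \<in> I \<Longrightarrow> averaged_nonexpansive (T i)"
    and "\<And>i. i \<in> I \<Longrightarrow> boundedly_regular_op (T i)"
    and "(\<Inter>i\<in>I. Fix (T i)) \<noteq> {}"
    and "innately_boundedly_regular I (\<lambda>i. Fix (T i))"
    and "random_map I r"
  defines "x \<equiv> rec_nat x0 (\<lambda>n xn. T (r n) xn)"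
  shows "\<exists>z \<in> (\<Inter>i\<in>I. Fix (T i)). x \<longlonglongrightarrow> z \<and>
           (affine (\<Inter>i\<in>I. Fix (T i)) \<longrightarrow> z = metric_proj (\<Inter>i\<in>I. Fix (T i)) x0)"
proof -
  define Z where "Z = (\<Inter>i\<in>I. Fix (T i))"
  have rI: "\<And>n. r n \<in> I" using assms(6) unfolding random_map_def by blast
  have x_Suc: "\<And>n. x (Suc n) = T (r n) (x n)" by (simp add: x_def)
  have fejer: "dist (x (Suc n)) w \<le> dist (x n) w" if "w \<in> Fix (T (r n))" for n w
    using nonexpansive_fejer[OF nonexpansive_if_averaged[OF assms(2)[OF rI]]] that
    by (simp add: x_Suc Fix_def)
  then have fejer_Z: "dist (x (Suc n)) w \<le> dist (x n) w" if "w \<in> Z" for n w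
    using that rI unfolding Z_def by blast
  obtain p where "p \<in> Z" using assms(4) Z_def by blast
  then have "(\<lambda>n. infdist (x n) (Fix (T (r n)))) \<longlonglongrightarrow> 0"
    using iteration_approaches_active_fixed_sets[of I T r x p, OF assms(1-3) rI x_Suc]
    by (simp add: Z_def Fix_def)
  then have "(\<lambda>n. infdist (x n) Z) \<longlonglongrightarrow> 0"
    unfolding Z_def using fejer_bounded[of x, OF fejer_Z[OF \<open>p \<in> Z\<close>]] fejer
    by (intro random_iteration_approaches_intersection[OF assms(5,6)])
  moreover have "closed Z"
    unfolding Z_def using closed_Fix nonexpansive_if_averaged assms(2) by blast
  ultimately obtain z where z: "z \<in> Z" "x \<longlonglongrightarrow> z"
    using fejer_convergent[of Z x, OF _ _ fejer_Z] assms(4) Z_def by blast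
  moreover have "affine Z \<Longrightarrow> z = metric_proj Z x0"
    using fejer_limit_metric_proj[of Z x, OF _ fejer_Z z] by (simp add: x_def)
  ultimately show ?thesis unfolding Z_def by blast
qed

end
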